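(* Let $\hat x\in\mathbb{R}^{n_1}$ and let (P$'$), (S1$'$), (S2), (S2$'$) be as defined in the context, and assume $d=c_y$ and that (S1$'$) and (S2$'$) are feasible. Then (P$'$) can be solved by solving (S1$'$) and (S2$'$) independently, as follows. Let $\mathfrak O$ be the optimal value of (S1$'$) if finite and $\mathfrak O=+\infty$ otherwise. Then: (S2) is unbounded if either (S2$'$) is unbounded (with an unbounded ray $(\tilde\psi,\tilde u_y)$, in which case $(\tilde\psi,\tilde u_y,0)$ is an unbounded ray of (S2)) or (S2$'$) has a finite optimum $\mathfrak O_2$ at $(\hat\psi,\hat u_y)$ with $\mathfrak O_2>\mathfrak O$ (in which case $(\hat\psi,\hat u_y,1)$ is an unbounded ray of (S2)); and if (S2$'$) has a finite optimum $\mathfrak O_2\le\mathfrak O$ at $(\hat\psi,\hat u_y)$, then $(\hat\psi,\hat u_y,0)$ is optimal for (S2) with value $\mathfrak O_2$. Consequently (P$'$) is unbounded if and only if (S1$'$) is unbounded, or (S2$'$) is unbounded, or the optimal value of (S2$'$) exceeds $\mathfrak O$; otherwise the optimal value of (P$'$) equals the optimal value of (S2$'$), attained at $(\psi,u_y,w,y,u_\psi,v)=(\hat\psi,\hat u_y,0,0,0,0)$.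
   Context: Data: $A\in\mathbb{R}^{m\times n_1}$, $B\in\mathbb{R}^{m\times n_2}$, $b\in\mathbb{R}^m$, $c_y,d\in\mathbb{R}^{n_2}$, $G_{xy}\in\mathbb{R}^{p\times n_1}$, $G_y\in\mathbb{R}^{p\times n_2}$, $h_y\in\mathbb{R}^p$, $G_{x\psi}\in\mathbb{R}^{\ell\times n_1}$, $G_\psi\in\mathbb{R}^{\ell\times m}$, $h_\psi\in\mathbb{R}^\ell$, $K_\psi\in\mathbb{R}^{q\times m}$, $K_s\in\mathbb{R}^{q\times r}$, $K_x\in\mathbb{R}^{q\times n_1}$, $k\in\mathbb{R}^q$ (the $K$'s, $k$ come from a McCormick linearization in a strong-duality reformulation of a bilevel program with lower level $\min_{y\ge0}\{d^Ty:Ax+By\ge b\}$, whose upper level additionally imposes $G_{x\psi}x+G_\psi\psi\ge h_\psi$ on the lower-level dual $\psi$). $\mathbf 1$ is the all-ones vector. (P$'$) (Benders subproblem, dual of $\min c_y^Ty$ s.t. $G_yy\ge h_y-G_{xy}\hat x$, $By\ge b-A\hat x$, $-B^T\psi\ge-d$, $-d^Ty+\psi^Tb-s^T\mathbf 1\ge 0$, $K_\psi\psi+K_ss\ge k+K_x\hat x$, $G_\psi\psi\ge h_\psi-G_{x\psi}\hat x$, $y,\psi,s\ge0$): maximize $\psi^T(b-A\hat x)+u_y^T(h_y-G_{xy}\hat x)+u_\psi^T(h_\psi-G_{x\psi}\hat x)-[d^Ty-v^T(k+K_x\hat x)]$ subject to $By-G_\psi^Tu_\psi-K_\psi^Tv\ge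 bw$, $B^T\psi+G_y^Tu_y\le dw+c_y$, $K_s^Tv\le\mathbf 1 w$, $\psi,u_y,u_\psi,w,y,v\ge0$. (S1$'$): minimize $d^Ty-u_\psi^T(h_\psi-G_{x\psi}\hat x)-v^T(k+K_x\hat x)$ subject to $By-G_\psi^Tu_\psi-K_\psi^Tv\ge b$, $K_s^Tv\le\mathbf 1$, $y,u_\psi,v\ge0$. (S2): maximize $\psi^T(b-A\hat x)+u_y^T(h_y-G_{xy}\hat x)-\mathfrak O w$ subject to $B^T\psi+G_y^Tu_y\le dw+c_y$, $\psi,u_y,w\ge0$ (with $w$ fixed at $0$ if $\mathfrak O=+\infty$). (S2$'$): (S2) with $w$ fixed at $0$, i.e., maximize $\psi^T(b-A\hat x)+u_y^T(h_y-G_{xy}\hat x)$ s.t. $B^T\psi+G_y^Tu_y\le c_y$, $\psi,u_y\ge0$. *)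

theory Defs
  imports "HOL-Analysis.Analysis"
begin

definition lp_max_unbounded :: "'a set \<Rightarrow> ('a \<Rightarrow> real) \<Rightarrow> bool" where
  "lp_max_unbounded F f \<longleftrightarrow> F \<noteq> {} \<and> (\<forall>M. \<exists>z\<in>F. f z > M)"

definition lp_min_unbounded :: "'a set \<Rightarrow> ('a \<Rightarrow> real) \<Rightarrow> bool" where
  "lp_min_unbounded F f \<longleftrightarrow> F \<noteq> {} \<and> (\<forall>M. \<exists>z\<in>F. f z < M)"

definition lp_max_opt :: "'a set \<Rightarrow> ('a \<Rightarrow> real) \<Rightarrow> 'a \<Rightarrow> bool" where
  "lp_max_opt F f z \<longleftrightarrow> z \<in> F \<and> (\<forall>z'\<in>F. f z' \<le> f z)"

definition lp_max_value :: "'a set \<Rightarrow> ('a \<Rightarrow> real) \<Rightarrow> ereal" where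
  "lp_max_value F f = (SUP z\<in>F. ereal (f z))"

definition lp_min_value :: "'a set \<Rightarrow> ('a \<Rightarrow> real) \<Rightarrow> ereal" where
  "lp_min_value F f = (INF z\<in>F. ereal (f z))"

definition lp_max_ray :: "'a::real_vector set \<Rightarrow> ('a \<Rightarrow> real) \<Rightarrow> 'a \<Rightarrow> bool" where
  "lp_max_ray F f r \<longleftrightarrow> F \<noteq> {} \<and> (\<forall>z\<in>F. \<forall>t::real. t \<ge> 0 \<longrightarrow> z + t *\<^sub>R r \<in> F) \<and> f r > 0"

definition S1_feas ::
  "real^'n2^'m \<Rightarrow> real^'m^'l \<Rightarrow> real^'m^'q \<Rightarrow> real^'r^'q \<Rightarrow> real^'m
   \<Rightarrow> ((real^'n2) \<times> (real^'l) \<times> (real^'q)) set" where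
  "S1_feas B G\<psi> K\<psi> Ks b = {(y, u\<psi>, v).
     B *v y - transpose G\<psi> *v u\<psi> - transpose K\<psi> *v v \<ge> b \<and>
     transpose Ks *v v \<le> vec 1 \<and> y \<ge> 0 \<and> u\<psi> \<ge> 0 \<and> v \<ge> 0}"

definition S1_obj ::
  "real^'n2 \<Rightarrow> real^'l \<Rightarrow> real^'n1^'l \<Rightarrow> real^'q \<Rightarrow> real^'n1^'q \<Rightarrow> real^'n1
   \<Rightarrow> (real^'n2) \<times> (real^'l) \<times> (real^'q) \<Rightarrow> real" where
  "S1_obj d h\<psi> Gx\<psi> k Kx xh = (\<lambda>(y, u\<psi>, v).
     d \<bullet> y - u\<psi> \<bullet> (h\<psi> - Gx\<psi> *v xh) - v \<bullet> (k + Kx *v xh))"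

definition frakO :: "'a set \<Rightarrow> ('a \<Rightarrow> real) \<Rightarrow> ereal" where
  "frakO F f = (if lp_min_value F f = -\<infinity> then \<infinity> else lp_min_value F f)"

definition S2_feas ::
  "real^'n2^'m \<Rightarrow> real^'n2^'p \<Rightarrow> real^'n2 \<Rightarrow> real^'n2 \<Rightarrow> ereal
   \<Rightarrow> ((real^'m) \<times> (real^'p) \<times> real) set" where
  "S2_feas B Gy d cy Oc = {(\<psi>, uy, w).
     transpose B *v \<psi> + transpose Gy *v uy \<le> w *\<^sub>R d + cy \<and>
     \<psi> \<ge> 0 \<and> uy \<ge> 0 \<and> w \<ge> 0 \<and> (Oc = \<infinity> \<longrightarrow> w = 0)}"

text \<open>Objective of (S2); when Oc = +infinity the term Oc*w is absent (w = 0).\<close>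
definition S2_obj ::
  "real^'m \<Rightarrow> real^'n1^'m \<Rightarrow> real^'p \<Rightarrow> real^'n1^'p \<Rightarrow> real^'n1 \<Rightarrow> ereal
   \<Rightarrow> (real^'m) \<times> (real^'p) \<times> real \<Rightarrow> real" where
  "S2_obj b A hy Gxy xh Oc = (\<lambda>(\<psi>, uy, w).
     \<psi> \<bullet> (b - A *v xh) + uy \<bullet> (hy - Gxy *v xh)
     - (if Oc = \<infinity> then 0 else real_of_ereal Oc * w))"

definition S2'_feas ::
  "real^'n2^'m \<Rightarrow> real^'n2^'p \<Rightarrow> real^'n2 \<Rightarrow> ((real^'m) \<times> (real^'p)) set" where
  "S2'_feas B Gy cy = {(\<psi>, uy).
     transpose B *v \<psi> + transpose Gy *v uy \<le> cy \<and> \<psi> \<ge> 0 \<and> uy \<ge> 0}"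

definition S2'_obj ::
  "real^'m \<Rightarrow> real^'n1^'m \<Rightarrow> real^'p \<Rightarrow> real^'n1^'p \<Rightarrow> real^'n1
   \<Rightarrow> (real^'m) \<times> (real^'p) \<Rightarrow> real" where
  "S2'_obj b A hy Gxy xh = (\<lambda>(\<psi>, uy). \<psi> \<bullet> (b - A *v xh) + uy \<bullet> (hy - Gxy *v xh))"

definition P_feas ::
  "real^'n2^'m \<Rightarrow> real^'m^'l \<Rightarrow> real^'m^'q \<Rightarrow> real^'r^'q \<Rightarrow> real^'n2^'p
   \<Rightarrow> real^'m \<Rightarrow> real^'n2 \<Rightarrow> real^'n2
   \<Rightarrow> ((real^'m) \<times> (real^'p) \<times> real \<times> (real^'n2) \<times> (real^'l) \<times> (real^'q)) set" where
  "P_feas B G\<psi> K\<psi> Ks Gy b d cy = {(\<psi>, uy, w, y, u\<psi>, v).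
     B *v y - transpose G\<psi> *v u\<psi> - transpose K\<psi> *v v \<ge> w *\<^sub>R b \<and>
     transpose B *v \<psi> + transpose Gy *v uy \<le> w *\<^sub>R d + cy \<and>
     transpose Ks *v v \<le> w *\<^sub>R vec 1 \<and>
     \<psi> \<ge> 0 \<and> uy \<ge> 0 \<and> u\<psi> \<ge> 0 \<and> w \<ge> 0 \<and> y \<ge> 0 \<and> v \<ge> 0}"

definition P_obj ::
  "real^'m \<Rightarrow> real^'n1^'m \<Rightarrow> real^'p \<Rightarrow> real^'n1^'p \<Rightarrow> real^'l \<Rightarrow> real^'n1^'l
   \<Rightarrow> real^'n2 \<Rightarrow> real^'q \<Rightarrow> real^'n1^'q \<Rightarrow> real^'n1
   \<Rightarrow> (real^'m) \<times> (real^'p) \<times> real \<times> (real^'n2) \<times> (real^'l) \<times> (real^'q) \<Rightarrow> real" where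
  "P_obj b A hy Gxy h\<psi> Gx\<psi> d k Kx xh = (\<lambda>(\<psi>, uy, w, y, u\<psi>, v).
     \<psi> \<bullet> (b - A *v xh) + uy \<bullet> (hy - Gxy *v xh) + u\<psi> \<bullet> (h\<psi> - Gx\<psi> *v xh)
     - (d \<bullet> y - v \<bullet> (k + Kx *v xh)))"

end

theory Submission
  imports Defs
begin

text \<open>With \<open>d = c\<^sub>y\<close>, a feasible point of (P') consists of \<open>(\<psi>, u\<^sub>y)\<close> with
  \<open>B\<^sup>T\<psi> + G\<^sub>y\<^sup>Tu\<^sub>y \<le> (w + 1) c\<^sub>y\<close>, i.e. \<open>w + 1\<close> times a point of (S2'), and of \<open>(y, u\<^sub>\<psi>, v)\<close>
  satisfying the constraints of (S1') with right-hand sides scaled by \<open>w\<close>. Dividing by \<open>w + 1\<close>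
  and by \<open>w\<close> (for \<open>w = 0\<close>, \<open>(y, u\<^sub>\<psi>, v)\<close> is a recession direction of (S1') and so has
  nonnegative cost) bounds the objective of (P') by \<open>V + w (V - O)\<close>, where \<open>V\<close> bounds (S2')
  from above and \<open>O\<close> is the optimal value of (S1'). Conversely, a point \<open>z\<close> of (S2') and a
  point \<open>s\<close> of (S1') whose cost is below the value of \<open>z\<close> give the unbounded ray
  \<open>(z, 1, s)\<close> of (P'). The statements about (S2) follow from the same scaling argument
  without the (S1') part.\<close>

lemma nonpos_if_ray_bounded_above:
  fixes a c e :: real
  assumes "\<And>t. t \<ge> 0 \<Longrightarrow> a + t * c \<le> e"
  shows "c \<le> 0"
proof (rule ccontr)
  assume "\<not> c \<le> 0"
  define t where "t = (\<bar>e - a\<bar> + 1) / c"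
  have "t \<ge> 0" and "t * c = \<bar>e - a\<bar> + 1"
    using \<open>\<not> c \<le> 0\<close> by (simp_all add: t_def)
  with assms[of t] abs_ge_self[of "e - a"] show False
    by linarith
qed

lemma vec_nonpos_if_ray_bounded_above:
  fixes a c e :: "real^'n"
  assumes "\<And>t. t \<ge> 0 \<Longrightarrow> a + t *\<^sub>R c \<le> e"
  shows "c \<le> 0"
  unfolding less_eq_vec_def
proof
  fix i
  have "a $ i + t * c $ i \<le> e $ i" if "t \<ge> 0" for t
    using assms[OF that] by (simp add: less_eq_vec_def)
  then show "c $ i \<le> 0 $ i"
    using nonpos_if_ray_bounded_above[of "a $ i" "c $ i" "e $ i"] by simp
qed

lemma vec_nonneg_if_ray_nonneg:
  fixes a c :: "real^'n"
  assumes "\<And>t. t \<ge> 0 \<Longrightarrow> 0 \<le> a + t *\<^sub>R c"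
  shows "0 \<le> c"
  unfolding less_eq_vec_def
proof
  fix i
  have "- a $ i + t * (- c $ i) \<le> 0" if "t \<ge> 0" for t
  proof -
    have "0 \<le> a $ i + t * c $ i"
      using assms[OF that] by (simp add: less_eq_vec_def)
    then show ?thesis
      by linarith
  qed
  then show "0 $ i \<le> c $ i"
    using nonpos_if_ray_bounded_above[of "- a $ i" "- c $ i" 0] by simp
qed

lemma lp_max_unbounded_if_ray:
  assumes "linear f" and "lp_max_ray F f r"
  shows "lp_max_unbounded F f"
  unfolding lp_max_unbounded_def
proof (intro conjI allI)
  from assms(2) obtain z where z: "z \<in> F"
    and ray: "\<And>t. t \<ge> 0 \<Longrightarrow> z + t *\<^sub>R r \<in> F" and pos: "f r > 0"
    by (auto simp: lp_max_ray_def)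
  show "F \<noteq> {}"
    using z by blast
  fix M
  define t where "t = (\<bar>M - f z\<bar> + 1) / f r"
  have "t \<ge> 0" and "t * f r = \<bar>M - f z\<bar> + 1"
    using pos by (simp_all add: t_def)
  moreover have "f (z + t *\<^sub>R r) = f z + t * f r"
    using assms(1) by (simp add: linear_add linear_scale)
  ultimately show "\<exists>z\<in>F. f z > M"
    using ray by (intro bexI[of _ "z + t *\<^sub>R r"]) auto
qed

lemma lp_max_unbounded_transfer:
  assumes "lp_max_unbounded F' f'"
    and "\<And>z. z \<in> F' \<Longrightarrow> g z \<in> F \<and> f (g z) = f' z"
  shows "lp_max_unbounded F f"
  using assms unfolding lp_max_unbounded_def by (metis all_not_in_conv)

lemma lp_max_value_eq_if_opt:
  assumes "lp_max_opt F f z"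
  shows "lp_max_value F f = ereal (f z)"
  using assms unfolding lp_max_opt_def lp_max_value_def
  by (intro antisym SUP_least SUP_upper) auto

lemma linear_nonneg_on_recession_direction:
  fixes f :: "'a::real_vector \<Rightarrow> real"
  assumes "linear f" and "z \<in> F" and "\<And>t. t \<ge> 0 \<Longrightarrow> z + t *\<^sub>R r \<in> F"
    and "\<And>x. x \<in> F \<Longrightarrow> c \<le> f x"
  shows "0 \<le> f r"
proof -
  have "- f z + t * (- f r) \<le> - c" if "t \<ge> 0" for t
    using assms(4)[OF assms(3)[OF that]] assms(1) by (simp add: linear_add linear_scale)
  then have "- f r \<le> 0"
    by (rule nonpos_if_ray_bounded_above)
  then show ?thesis
    by simp
qed

lemma lp_min_value_eq_MInfty_iff: "lp_min_value F f = -\<infinity> \<longleftrightarrow> (\<forall>M. \<exists>x\<in>F. f x < M)"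
proof
  assume inf: "lp_min_value F f = -\<infinity>"
  show "\<forall>M. \<exists>x\<in>F. f x < M"
  proof
    fix M
    have "(INF x\<in>F. ereal (f x)) < ereal M"
      using inf by (simp add: lp_min_value_def)
    then show "\<exists>x\<in>F. f x < M"
      by (auto simp: INF_less_iff)
  qed
next
  assume unbounded: "\<forall>M. \<exists>x\<in>F. f x < M"
  show "lp_min_value F f = -\<infinity>"
  proof (rule ccontr)
    assume "lp_min_value F f \<noteq> -\<infinity>"
    then obtain l where "l > -\<infinity>" and l: "\<And>x. x \<in> F \<Longrightarrow> l \<le> ereal (f x)"
      unfolding lp_min_value_def INF_eq_minf by blast
    obtain x where "x \<in> F" and "f x < real_of_ereal l"
      using unbounded by blast
    with \<open>l > -\<infinity>\<close> l[of x] show False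
      by (cases l) auto
  qed
qed

lemma frakO_eq_infinity_iff:
  assumes "F \<noteq> {}"
  shows "frakO F f = \<infinity> \<longleftrightarrow> lp_min_unbounded F f"
proof -
  obtain x where "x \<in> F"
    using assms by blast
  then have "lp_min_value F f \<le> ereal (f x)"
    unfolding lp_min_value_def by (rule INF_lower)
  then have "lp_min_value F f \<noteq> \<infinity>"
    by auto
  then show ?thesis
    using assms by (auto simp: frakO_def lp_min_unbounded_def lp_min_value_eq_MInfty_iff)
qed

lemma frakO_neq_MInfty: "frakO F f \<noteq> -\<infinity>"
  by (simp add: frakO_def)

lemma frakO_le:
  assumes "frakO F f = ereal c" and "x \<in> F"
  shows "c \<le> f x"
proof -
  have "lp_min_value F f = ereal c"
    using assms(1) by (simp add: frakO_def split: if_splits)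
  then show ?thesis
    using INF_lower[OF assms(2), of "\<lambda>x. ereal (f x)"] by (simp add: lp_min_value_def)
qed

lemma frakO_less:
  assumes "frakO F f = ereal c" and "c < e"
  shows "\<exists>x\<in>F. f x < e"
proof -
  have "lp_min_value F f < ereal e"
    using assms by (simp add: frakO_def split: if_splits)
  then show ?thesis
    by (auto simp: lp_min_value_def INF_less_iff)
qed

lemma linear_S1_obj: "linear (S1_obj d h\<psi> Gx\<psi> k Kx xh)"
  by (rule linearI)
    (auto simp: S1_obj_def inner_add_left inner_add_right distrib_left right_diff_distrib)

lemma linear_S2'_obj: "linear (S2'_obj b A hy Gxy xh)"
  by (rule linearI) (auto simp: S2'_obj_def inner_add_left distrib_left)

lemma linear_S2_obj: "linear (S2_obj b A hy Gxy xh Oc)"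
  by (rule linearI) (auto simp: S2_obj_def inner_add_left distrib_left right_diff_distrib)

lemma linear_P_obj: "linear (P_obj b A hy Gxy h\<psi> Gx\<psi> d k Kx xh)"
  by (rule linearI)
    (auto simp: P_obj_def inner_add_left inner_add_right distrib_left right_diff_distrib)

lemma P_obj_eq:
  "P_obj b A hy Gxy h\<psi> Gx\<psi> d k Kx xh (\<psi>, uy, w, y, u\<psi>, v)
     = S2'_obj b A hy Gxy xh (\<psi>, uy) - S1_obj d h\<psi> Gx\<psi> k Kx xh (y, u\<psi>, v)"
  by (simp add: P_obj_def S2'_obj_def S1_obj_def)

lemma S2_obj_eq:
  "S2_obj b A hy Gxy xh Oc (\<psi>, uy, w)
     = S2'_obj b A hy Gxy xh (\<psi>, uy) - (if Oc = \<infinity> then 0 else real_of_ereal Oc * w)"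
  by (simp add: S2_obj_def S2'_obj_def)

subsection \<open>Splitting (P') into (S1') and (S2')\<close>

text \<open>The hypothesis \<open>d = c\<^sub>y\<close> is built in: \<open>c\<^sub>y\<close> is passed for \<open>d\<close> throughout.\<close>

locale benders_subproblems =
  fixes A :: "real^'n1^'m" and B :: "real^'n2^'m" and b :: "real^'m" and cy :: "real^'n2"
    and Gxy :: "real^'n1^'p" and Gy :: "real^'n2^'p" and hy :: "real^'p"
    and Gx\<psi> :: "real^'n1^'l" and G\<psi> :: "real^'m^'l" and h\<psi> :: "real^'l"
    and K\<psi> :: "real^'m^'q" and Ks :: "real^'r^'q" and Kx :: "real^'n1^'q" and k :: "real^'q"
    and xh :: "real^'n1"
begin

abbreviation "F1 \<equiv> S1_feas B G\<psi> K\<psi> Ks b"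
abbreviation "f1 \<equiv> S1_obj cy h\<psi> Gx\<psi> k Kx xh"
abbreviation "Oc \<equiv> frakO F1 f1"
abbreviation "F2 \<equiv> S2_feas B Gy cy cy Oc"
abbreviation "f2 \<equiv> S2_obj b A hy Gxy xh Oc"
abbreviation "F2' \<equiv> S2'_feas B Gy cy"
abbreviation "f2' \<equiv> S2'_obj b A hy Gxy xh"
abbreviation "FP \<equiv> P_feas B G\<psi> K\<psi> Ks Gy b cy cy"
abbreviation "fP \<equiv> P_obj b A hy Gxy h\<psi> Gx\<psi> cy k Kx xh"

abbreviation "dual_lhs \<psi> uy \<equiv> transpose B *v \<psi> + transpose Gy *v uy"
abbreviation "primal_lhs y u\<psi> v \<equiv> B *v y - transpose G\<psi> *v u\<psi> - transpose K\<psi> *v v"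

text \<open>The simp rule \<open>transpose_matrix_vector\<close> turns \<open>transpose M *v x\<close> into \<open>x v* M\<close>; it is
  deleted wherever the shapes of \<open>dual_lhs\<close> and \<open>primal_lhs\<close> must survive simplification.\<close>

lemma mem_F2_iff:
  "(\<psi>, uy, w) \<in> F2 \<longleftrightarrow> dual_lhs \<psi> uy \<le> (w + 1) *\<^sub>R cy \<and> 0 \<le> \<psi> \<and> 0 \<le> uy \<and> 0 \<le> w
     \<and> (Oc = \<infinity> \<longrightarrow> w = 0)"
  by (simp add: S2_feas_def scaleR_left_distrib)

lemma mem_FP_iff:
  "(\<psi>, uy, w, y, u\<psi>, v) \<in> FP \<longleftrightarrow> w *\<^sub>R b \<le> primal_lhs y u\<psi> v
     \<and> dual_lhs \<psi> uy \<le> (w + 1) *\<^sub>R cy \<and> transpose Ks *v v \<le> w *\<^sub>R vec 1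
     \<and> 0 \<le> \<psi> \<and> 0 \<le> uy \<and> 0 \<le> u\<psi> \<and> 0 \<le> w \<and> 0 \<le> y \<and> 0 \<le> v"
  by (auto simp: P_feas_def scaleR_left_distrib)

lemma F2'_embed_F2: "(\<psi>, uy) \<in> F2' \<Longrightarrow> (\<psi>, uy, 0) \<in> F2"
  by (simp add: mem_F2_iff S2'_feas_def)

lemma S2_obj_embed [simp]: "f2 (\<psi>, uy, 0) = f2' (\<psi>, uy)"
  by (simp add: S2_obj_eq)

lemma F2'_embed_FP: "(\<psi>, uy) \<in> F2' \<Longrightarrow> (\<psi>, uy, 0, 0, 0, 0) \<in> FP"
  by (simp add: mem_FP_iff S2'_feas_def)

lemma P_obj_embed [simp]: "fP (\<psi>, uy, 0, 0, 0, 0) = f2' (\<psi>, uy)"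
  by (simp add: P_obj_eq S1_obj_def)

lemma dual_lhs_add_scaleR:
  "dual_lhs (\<psi> + t *\<^sub>R \<psi>') (uy + t *\<^sub>R uy') = dual_lhs \<psi> uy + t *\<^sub>R dual_lhs \<psi>' uy'"
  by (simp add: algebra_simps del: transpose_matrix_vector)

lemma primal_lhs_add_scaleR:
  "primal_lhs (y + t *\<^sub>R y') (u\<psi> + t *\<^sub>R u\<psi>') (v + t *\<^sub>R v')
     = primal_lhs y u\<psi> v + t *\<^sub>R primal_lhs y' u\<psi>' v'"
  by (simp add: algebra_simps del: transpose_matrix_vector)

lemma Ks_add_scaleR: "transpose Ks *v (v + t *\<^sub>R v') = transpose Ks *v v + t *\<^sub>R (transpose Ks *v v')"
  by (simp add: algebra_simps del: transpose_matrix_vector)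

lemma F2'_inverse_scaled:
  assumes "dual_lhs \<psi> uy \<le> s *\<^sub>R cy" and "0 \<le> \<psi>" and "0 \<le> uy" and "0 < s"
  shows "inverse s *\<^sub>R (\<psi>, uy) \<in> F2'"
proof -
  have "dual_lhs (inverse s *\<^sub>R \<psi>) (inverse s *\<^sub>R uy) = inverse s *\<^sub>R dual_lhs \<psi> uy"
    using dual_lhs_add_scaleR[of 0 "inverse s" \<psi> 0 uy] by simp
  also have "\<dots> \<le> inverse s *\<^sub>R (s *\<^sub>R cy)"
    using assms(1,4) by (intro scaleR_left_mono) auto
  finally show ?thesis
    using assms(2-4) by (auto simp: S2'_feas_def intro!: scaleR_nonneg_nonneg)
qed

lemma F1_inverse_scaled:
  assumes "w *\<^sub>R b \<le> primal_lhs y u\<psi> v" and "transpose Ks *v v \<le> w *\<^sub>R vec 1"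
    and "0 \<le> y" and "0 \<le> u\<psi>" and "0 \<le> v" and "0 < w"
  shows "inverse w *\<^sub>R (y, u\<psi>, v) \<in> F1"
proof -
  have "b = inverse w *\<^sub>R (w *\<^sub>R b)"
    using assms(6) by simp
  also have "\<dots> \<le> inverse w *\<^sub>R primal_lhs y u\<psi> v"
    using assms(1,6) by (intro scaleR_left_mono) auto
  also have "\<dots> = primal_lhs (inverse w *\<^sub>R y) (inverse w *\<^sub>R u\<psi>) (inverse w *\<^sub>R v)"
    using primal_lhs_add_scaleR[of 0 "inverse w" y 0 u\<psi> 0 v] by simp
  finally have primal: "b \<le> primal_lhs (inverse w *\<^sub>R y) (inverse w *\<^sub>R u\<psi>) (inverse w *\<^sub>R v)" .
  have "transpose Ks *v (inverse w *\<^sub>R v) = inverse w *\<^sub>R (transpose Ks *v v)"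
    using Ks_add_scaleR[of 0 "inverse w" v] by simp
  also have "\<dots> \<le> inverse w *\<^sub>R (w *\<^sub>R vec 1)"
    using assms(2,6) by (intro scaleR_left_mono) auto
  also have "\<dots> = vec 1"
    using assms(6) by simp
  finally show ?thesis
    using primal assms(3-6) by (auto simp: S1_feas_def intro!: scaleR_nonneg_nonneg)
qed

lemma F1_recession:
  assumes "s \<in> F1" and "0 \<le> primal_lhs y u\<psi> v" and "transpose Ks *v v \<le> 0"
    and "0 \<le> y" and "0 \<le> u\<psi>" and "0 \<le> v" and "0 \<le> t"
  shows "s + t *\<^sub>R (y, u\<psi>, v) \<in> F1"
proof -
  obtain y0 u0 v0 where s: "s = (y0, u0, v0)"
    by (cases s) auto
  have s_mem: "b \<le> primal_lhs y0 u0 v0" "transpose Ks *v v0 \<le> vec 1" "0 \<le> y0" "0 \<le> u0" "0 \<le> v0"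
    using assms(1) s by (simp_all add: S1_feas_def del: transpose_matrix_vector)
  have "b + 0 \<le> primal_lhs y0 u0 v0 + t *\<^sub>R primal_lhs y u\<psi> v"
    using s_mem(1) assms(2,7) by (intro add_mono scaleR_nonneg_nonneg)
  moreover have "transpose Ks *v v0 + t *\<^sub>R (transpose Ks *v v) \<le> vec 1 + 0"
    using s_mem(2) assms(3,7) by (intro add_mono scaleR_nonneg_nonpos)
  ultimately show ?thesis
    using s s_mem assms(4-7)
    by (auto simp: S1_feas_def primal_lhs_add_scaleR Ks_add_scaleR simp del: transpose_matrix_vector
        intro!: add_nonneg_nonneg scaleR_nonneg_nonneg)
qed

lemma S2'_obj_le_scaled:
  assumes "dual_lhs \<psi> uy \<le> s *\<^sub>R cy" and "0 \<le> \<psi>" and "0 \<le> uy" and "0 < s"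
    and "\<And>z. z \<in> F2' \<Longrightarrow> f2' z \<le> V"
  shows "f2' (\<psi>, uy) \<le> s * V"
proof -
  have "inverse s * f2' (\<psi>, uy) = f2' (inverse s *\<^sub>R (\<psi>, uy))"
    by (simp only: linear_scale[OF linear_S2'_obj] real_scaleR_def)
  also have "\<dots> \<le> V"
    by (rule assms(5)[OF F2'_inverse_scaled[OF assms(1-4)]])
  finally show ?thesis
    using assms(4) by (simp add: field_simps)
qed

lemma F2'_ray_direction:
  assumes "lp_max_ray F2' f (\<psi>, uy)"
  shows "dual_lhs \<psi> uy \<le> 0" and "0 \<le> \<psi>" and "0 \<le> uy"
proof -
  from assms obtain z0 where "z0 \<in> F2'"
    and ray: "\<And>t. t \<ge> 0 \<Longrightarrow> z0 + t *\<^sub>R (\<psi>, uy) \<in> F2'"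
    unfolding lp_max_ray_def by blast
  obtain a g where z0: "z0 = (a, g)"
    by (cases z0) auto
  have ray_mem: "dual_lhs a g + t *\<^sub>R dual_lhs \<psi> uy \<le> cy"
      "0 \<le> a + t *\<^sub>R \<psi>" "0 \<le> g + t *\<^sub>R uy" if "t \<ge> 0" for t
    using ray[OF that] z0 by (simp_all add: S2'_feas_def dual_lhs_add_scaleR del: transpose_matrix_vector)
  show "dual_lhs \<psi> uy \<le> 0"
    using ray_mem(1) by (rule vec_nonpos_if_ray_bounded_above)
  show "0 \<le> \<psi>"
    using ray_mem(2) by (rule vec_nonneg_if_ray_nonneg)
  show "0 \<le> uy"
    using ray_mem(3) by (rule vec_nonneg_if_ray_nonneg)
qed

lemma F2_recession:
  assumes "z \<in> F2" and "dual_lhs \<psi> uy \<le> \<omega> *\<^sub>R cy" and "0 \<le> \<psi>" and "0 \<le> uy" and "0 \<le> \<omega>"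
    and "Oc = \<infinity> \<longrightarrow> \<omega> = 0" and "0 \<le> t"
  shows "z + t *\<^sub>R (\<psi>, uy, \<omega>) \<in> F2"
proof -
  obtain a g w where z: "z = (a, g, w)"
    by (cases z) auto
  have z_mem: "dual_lhs a g \<le> (w + 1) *\<^sub>R cy" "0 \<le> a" "0 \<le> g" "0 \<le> w" "Oc = \<infinity> \<longrightarrow> w = 0"
    using assms(1) z by (simp_all add: mem_F2_iff del: transpose_matrix_vector)
  have "dual_lhs a g + t *\<^sub>R dual_lhs \<psi> uy \<le> (w + 1) *\<^sub>R cy + t *\<^sub>R (\<omega> *\<^sub>R cy)"
    using z_mem(1) assms(2,7) by (intro add_mono scaleR_left_mono)
  also have "\<dots> = (w + t * \<omega> + 1) *\<^sub>R cy"
    by (simp add: algebra_simps)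
  finally show ?thesis
    using z z_mem assms(3-7)
    by (auto simp: mem_F2_iff dual_lhs_add_scaleR simp del: transpose_matrix_vector
        intro!: add_nonneg_nonneg scaleR_nonneg_nonneg)
qed

lemma FP_recession:
  assumes "q \<in> FP" and "(\<psi>, uy) \<in> F2'" and "(y, u\<psi>, v) \<in> F1" and "0 \<le> t"
  shows "q + t *\<^sub>R (\<psi>, uy, 1, y, u\<psi>, v) \<in> FP"
proof -
  obtain \<psi>0 uy0 w y0 u0 v0 where q: "q = (\<psi>0, uy0, w, y0, u0, v0)"
    by (cases q) auto
  have q_mem: "w *\<^sub>R b \<le> primal_lhs y0 u0 v0" "dual_lhs \<psi>0 uy0 \<le> (w + 1) *\<^sub>R cy"
      "transpose Ks *v v0 \<le> w *\<^sub>R vec 1" "0 \<le> \<psi>0" "0 \<le> uy0" "0 \<le> u0" "0 \<le> w" "0 \<le> y0" "0 \<le> v0"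
    using assms(1) q by (simp_all add: mem_FP_iff del: transpose_matrix_vector)
  have z_mem: "dual_lhs \<psi> uy \<le> cy" "0 \<le> \<psi>" "0 \<le> uy"
    using assms(2) by (simp_all add: S2'_feas_def del: transpose_matrix_vector)
  have s_mem: "b \<le> primal_lhs y u\<psi> v" "transpose Ks *v v \<le> vec 1" "0 \<le> y" "0 \<le> u\<psi>" "0 \<le> v"
    using assms(3) by (simp_all add: S1_feas_def del: transpose_matrix_vector)
  have "w *\<^sub>R b + t *\<^sub>R b \<le> primal_lhs y0 u0 v0 + t *\<^sub>R primal_lhs y u\<psi> v"
    using q_mem(1) s_mem(1) assms(4) by (intro add_mono scaleR_left_mono)
  moreover have "dual_lhs \<psi>0 uy0 + t *\<^sub>R dual_lhs \<psi> uy \<le> (w + 1) *\<^sub>R cy + t *\<^sub>R cy"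
    using q_mem(2) z_mem(1) assms(4) by (intro add_mono scaleR_left_mono)
  moreover have "transpose Ks *v v0 + t *\<^sub>R (transpose Ks *v v) \<le> w *\<^sub>R vec 1 + t *\<^sub>R vec 1"
    using q_mem(3) s_mem(2) assms(4) by (intro add_mono scaleR_left_mono)
  ultimately show ?thesis
    using q q_mem z_mem s_mem assms(4)
    by (auto simp: mem_FP_iff primal_lhs_add_scaleR dual_lhs_add_scaleR Ks_add_scaleR
        scaleR_left_distrib add_ac simp del: transpose_matrix_vector
        intro!: add_nonneg_nonneg scaleR_nonneg_nonneg)
qed

lemma P_unbounded_if_gap:
  assumes "z \<in> F2'" and "s \<in> F1" and "f1 s < f2' z"
  shows "lp_max_unbounded FP fP"
proof -
  obtain \<psi> uy y u\<psi> v where z: "z = (\<psi>, uy)" and s: "s = (y, u\<psi>, v)"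
    by (cases z, cases s) auto
  have "FP \<noteq> {}"
    using F2'_embed_FP assms(1) z by blast
  moreover have "q + t *\<^sub>R (\<psi>, uy, 1, y, u\<psi>, v) \<in> FP" if "q \<in> FP" and "0 \<le> t" for q t
    using FP_recession that assms(1,2) z s by blast
  moreover have "0 < fP (\<psi>, uy, 1, y, u\<psi>, v)"
    using assms(3) z s by (simp add: P_obj_eq)
  ultimately have "lp_max_ray FP fP (\<psi>, uy, 1, y, u\<psi>, v)"
    unfolding lp_max_ray_def by blast
  then show ?thesis
    by (rule lp_max_unbounded_if_ray[OF linear_P_obj])
qed

lemma S2_unbounded_if_S2'_unbounded:
  assumes "lp_max_unbounded F2' f2'"
  shows "lp_max_unbounded F2 f2"
  using assms by (rule lp_max_unbounded_transfer[where g = "\<lambda>(\<psi>, uy). (\<psi>, uy, 0)"])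
    (auto simp: F2'_embed_F2)

lemma S2_ray_if_S2'_ray:
  assumes "lp_max_ray F2' f2' (\<psi>, uy)"
  shows "lp_max_ray F2 f2 (\<psi>, uy, 0)"
proof -
  from assms obtain a g where "(a, g) \<in> F2'" and "0 < f2' (\<psi>, uy)"
    unfolding lp_max_ray_def by auto
  then have "F2 \<noteq> {}" and "0 < f2 (\<psi>, uy, 0)"
    using F2'_embed_F2 by auto
  moreover have dir: "dual_lhs \<psi> uy \<le> 0 *\<^sub>R cy"
    using F2'_ray_direction(1)[OF assms] by simp
  have "z + t *\<^sub>R (\<psi>, uy, 0) \<in> F2" if "z \<in> F2" and "0 \<le> t" for z t
    using F2_recession[OF that(1) dir F2'_ray_direction(2,3)[OF assms] order_refl _ that(2)]
    by simp
  ultimately show ?thesis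
    unfolding lp_max_ray_def by blast
qed

lemma S2_ray_if_above_Oc:
  assumes "(\<psi>, uy) \<in> F2'" and "Oc < ereal (f2' (\<psi>, uy))"
  shows "lp_max_ray F2 f2 (\<psi>, uy, 1)" and "lp_max_unbounded F2 f2"
proof -
  obtain c where c: "Oc = ereal c"
    using assms(2) frakO_neq_MInfty by (cases Oc) auto
  have mem: "dual_lhs \<psi> uy \<le> 1 *\<^sub>R cy" "0 \<le> \<psi>" "0 \<le> uy"
    using assms(1) by (simp_all add: S2'_feas_def del: transpose_matrix_vector)
  have "F2 \<noteq> {}"
    using F2'_embed_F2[OF assms(1)] by blast
  moreover have "z + t *\<^sub>R (\<psi>, uy, 1) \<in> F2" if "z \<in> F2" and "0 \<le> t" for z t
    using F2_recession[OF that(1) mem] c that(2) by simp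
  moreover have "0 < f2 (\<psi>, uy, 1)"
    using assms(2) c by (simp add: S2_obj_eq)
  ultimately show ray: "lp_max_ray F2 f2 (\<psi>, uy, 1)"
    unfolding lp_max_ray_def by blast
  then show "lp_max_unbounded F2 f2"
    by (rule lp_max_unbounded_if_ray[OF linear_S2_obj])
qed

lemma S2_opt_if_below_Oc:
  assumes "lp_max_opt F2' f2' (\<psi>, uy)" and "ereal (f2' (\<psi>, uy)) \<le> Oc"
  shows "lp_max_opt F2 f2 (\<psi>, uy, 0)"
  unfolding lp_max_opt_def
proof (intro conjI ballI)
  from assms(1) have mem: "(\<psi>, uy) \<in> F2'" and opt: "\<And>z. z \<in> F2' \<Longrightarrow> f2' z \<le> f2' (\<psi>, uy)"
    by (auto simp: lp_max_opt_def)
  show "(\<psi>, uy, 0) \<in> F2"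
    using F2'_embed_F2[OF mem] .
  fix z
  assume "z \<in> F2"
  moreover obtain a g w where z: "z = (a, g, w)"
    by (cases z) auto
  ultimately have mem_z: "dual_lhs a g \<le> (w + 1) *\<^sub>R cy" "0 \<le> a" "0 \<le> g"
    and w: "0 \<le> w" "Oc = \<infinity> \<longrightarrow> w = 0"
    by (simp_all add: mem_F2_iff del: transpose_matrix_vector)
  have bound: "f2' (a, g) \<le> (w + 1) * f2' (\<psi>, uy)"
    using w(1) by (intro S2'_obj_le_scaled[OF mem_z _ opt]) simp
  show "f2 z \<le> f2 (\<psi>, uy, 0)"
  proof (cases "Oc = \<infinity>")
    case True
    then show ?thesis
      using bound w z by (simp add: S2_obj_eq)
  next
    case False
    then obtain c where c: "Oc = ereal c"
      using frakO_neq_MInfty by (cases Oc) auto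
    then have "w * f2' (\<psi>, uy) \<le> w * c"
      using assms(2) w(1) by (intro mult_left_mono) auto
    then show ?thesis
      using bound z c by (simp add: S2_obj_eq algebra_simps)
  qed
qed

end

locale benders_split = benders_subproblems +
  assumes F1_nonempty: "F1 \<noteq> {}" and F2'_nonempty: "F2' \<noteq> {}"
begin

lemma Oc_cases:
  obtains (unbounded) "lp_min_unbounded F1 f1" and "Oc = \<infinity>"
    | (finite) c where "\<not> lp_min_unbounded F1 f1" and "Oc = ereal c"
proof (cases "lp_min_unbounded F1 f1")
  case True
  then show ?thesis
    using that(1) frakO_eq_infinity_iff[OF F1_nonempty] by blast
next
  case False
  then have "Oc \<noteq> \<infinity>"
    using frakO_eq_infinity_iff[OF F1_nonempty] by blast
  then obtain c where "Oc = ereal c"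
    using frakO_neq_MInfty by (cases Oc) auto
  then show ?thesis
    using that(2) False by blast
qed

lemma S1_obj_ge_scaled:
  assumes "w *\<^sub>R b \<le> primal_lhs y u\<psi> v" and "transpose Ks *v v \<le> w *\<^sub>R vec 1"
    and "0 \<le> y" and "0 \<le> u\<psi>" and "0 \<le> v" and "0 \<le> w"
    and "\<And>s. s \<in> F1 \<Longrightarrow> c \<le> f1 s"
  shows "w * c \<le> f1 (y, u\<psi>, v)"
proof (cases "w = 0")
  case True
  obtain s0 where s0: "s0 \<in> F1"
    using F1_nonempty by blast
  have "s0 + t *\<^sub>R (y, u\<psi>, v) \<in> F1" if "0 \<le> t" for t
    using F1_recession[OF s0 _ _ assms(3-5) that] assms(1,2) True by simp
  then have "0 \<le> f1 (y, u\<psi>, v)"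
    using linear_nonneg_on_recession_direction[OF linear_S1_obj s0] assms(7) by blast
  with True show ?thesis
    by simp
next
  case False
  then have "0 < w"
    using assms(6) by simp
  have "c \<le> f1 (inverse w *\<^sub>R (y, u\<psi>, v))"
    using assms(7) F1_inverse_scaled[OF assms(1-5) \<open>0 < w\<close>] by blast
  also have "\<dots> = inverse w * f1 (y, u\<psi>, v)"
    by (simp only: linear_scale[OF linear_S1_obj] real_scaleR_def)
  finally show ?thesis
    using \<open>0 < w\<close> by (simp add: field_simps)
qed

lemma P_obj_le_bound:
  assumes "q \<in> FP" and "\<And>z. z \<in> F2' \<Longrightarrow> f2' z \<le> V" and "\<And>s. s \<in> F1 \<Longrightarrow> c \<le> f1 s"
    and "V \<le> c"
  shows "fP q \<le> V"
proof -
  obtain \<psi> uy w y u\<psi> v where q: "q = (\<psi>, uy, w, y, u\<psi>, v)"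
    by (cases q) auto
  have "f2' (\<psi>, uy) \<le> (w + 1) * V"
    using assms(1,2) q by (intro S2'_obj_le_scaled) (auto simp: mem_FP_iff)
  moreover have "w * c \<le> f1 (y, u\<psi>, v)"
    using assms(1,3) q by (intro S1_obj_ge_scaled) (auto simp: mem_FP_iff)
  moreover have "w * V \<le> w * c"
    using assms(1,4) q by (intro mult_left_mono) (auto simp: mem_FP_iff)
  ultimately show ?thesis
    using q by (simp add: P_obj_eq algebra_simps)
qed

lemma P_unbounded_iff:
  "lp_max_unbounded FP fP \<longleftrightarrow>
     lp_min_unbounded F1 f1 \<or> lp_max_unbounded F2' f2' \<or> lp_max_value F2' f2' > Oc"
proof
  assume unbounded: "lp_max_unbounded FP fP"
  show "lp_min_unbounded F1 f1 \<or> lp_max_unbounded F2' f2' \<or> lp_max_value F2' f2' > Oc"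
  proof (rule ccontr)
    assume "\<not> (lp_min_unbounded F1 f1 \<or> lp_max_unbounded F2' f2' \<or> lp_max_value F2' f2' > Oc)"
    then have "\<not> lp_min_unbounded F1 f1" and below: "lp_max_value F2' f2' \<le> Oc"
      by auto
    then obtain c where c: "Oc = ereal c"
      by (cases rule: Oc_cases) auto
    have "f2' z \<le> c" if "z \<in> F2'" for z
      using below c that unfolding lp_max_value_def by (simp add: SUP_le_iff)
    then have "fP q \<le> c" if "q \<in> FP" for q
      using P_obj_le_bound[OF that _ frakO_le[OF c] order_refl] by blast
    with unbounded show False
      unfolding lp_max_unbounded_def by (meson not_le)
  qed
next
  assume "lp_min_unbounded F1 f1 \<or> lp_max_unbounded F2' f2' \<or> lp_max_value F2' f2' > Oc"
  then consider (S1) "lp_min_unbounded F1 f1" | (S2') "lp_max_unbounded F2' f2'"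
    | (gap) "lp_max_value F2' f2' > Oc"
    by blast
  then show "lp_max_unbounded FP fP"
  proof cases
    case S1
    obtain z where "z \<in> F2'"
      using F2'_nonempty by blast
    moreover obtain s where "s \<in> F1" and "f1 s < f2' z"
      using S1 unfolding lp_min_unbounded_def by blast
    ultimately show ?thesis
      by (rule P_unbounded_if_gap)
  next
    case S2'
    then show ?thesis
      by (rule lp_max_unbounded_transfer[where g = "\<lambda>(\<psi>, uy). (\<psi>, uy, 0, 0, 0, 0)"])
        (auto simp: F2'_embed_FP)
  next
    case gap
    then obtain c where c: "Oc = ereal c"
      using frakO_neq_MInfty by (cases Oc) auto
    obtain z where "z \<in> F2'" and "c < f2' z"
      using gap c unfolding lp_max_value_def by (auto simp: less_SUP_iff)
    moreover obtain s where "s \<in> F1" and "f1 s < f2' z"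
      using frakO_less[OF c \<open>c < f2' z\<close>] by blast
    ultimately show ?thesis
      by (intro P_unbounded_if_gap)
  qed
qed

lemma P_opt_if_below_Oc:
  assumes "\<not> lp_min_unbounded F1 f1" and "lp_max_opt F2' f2' (\<psi>, uy)"
    and "ereal (f2' (\<psi>, uy)) \<le> Oc"
  shows "lp_max_opt FP fP (\<psi>, uy, 0, 0, 0, 0)" and "lp_max_value FP fP = lp_max_value F2' f2'"
proof -
  obtain c where c: "Oc = ereal c"
    using assms(1) by (cases rule: Oc_cases) auto
  from assms(2) have mem: "(\<psi>, uy) \<in> F2'" and opt: "\<And>z. z \<in> F2' \<Longrightarrow> f2' z \<le> f2' (\<psi>, uy)"
    by (auto simp: lp_max_opt_def)
  have "fP q \<le> f2' (\<psi>, uy)" if "q \<in> FP" for q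
    using P_obj_le_bound[OF that opt frakO_le[OF c]] assms(3) c by simp
  then show opt_P: "lp_max_opt FP fP (\<psi>, uy, 0, 0, 0, 0)"
    using F2'_embed_FP[OF mem] unfolding lp_max_opt_def by simp
  show "lp_max_value FP fP = lp_max_value F2' f2'"
    using lp_max_value_eq_if_opt[OF opt_P] lp_max_value_eq_if_opt[OF assms(2)] by simp
qed

end

theorem corollary2:
  fixes A :: "real^'n1^'m" and B :: "real^'n2^'m" and b :: "real^'m"
    and cy d :: "real^'n2"
    and Gxy :: "real^'n1^'p" and Gy :: "real^'n2^'p" and hy :: "real^'p"
    and Gx\<psi> :: "real^'n1^'l" and G\<psi> :: "real^'m^'l" and h\<psi> :: "real^'l"
    and K\<psi> :: "real^'m^'q" and Ks :: "real^'r^'q" and Kx :: "real^'n1^'q" and k :: "real^'q"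
    and xh :: "real^'n1"
  defines "F1 \<equiv> S1_feas B G\<psi> K\<psi> Ks b"
    and "f1 \<equiv> S1_obj d h\<psi> Gx\<psi> k Kx xh"
    and "Oc \<equiv> frakO (S1_feas B G\<psi> K\<psi> Ks b) (S1_obj d h\<psi> Gx\<psi> k Kx xh)"
    and "F2 \<equiv> S2_feas B Gy d cy (frakO (S1_feas B G\<psi> K\<psi> Ks b) (S1_obj d h\<psi> Gx\<psi> k Kx xh))"
    and "f2 \<equiv> S2_obj b A hy Gxy xh (frakO (S1_feas B G\<psi> K\<psi> Ks b) (S1_obj d h\<psi> Gx\<psi> k Kx xh))"
    and "F2' \<equiv> S2'_feas B Gy cy"
    and "f2' \<equiv> S2'_obj b A hy Gxy xh"
    and "FP \<equiv> P_feas B G\<psi> K\<psi> Ks Gy b d cy"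
    and "fP \<equiv> P_obj b A hy Gxy h\<psi> Gx\<psi> d k Kx xh"
  assumes dc: "d = cy"
    and feas1: "F1 \<noteq> {}"
    and feas2': "F2' \<noteq> {}"
  shows
    "(lp_max_unbounded F2' f2' \<longrightarrow> lp_max_unbounded F2 f2)
     \<and> (\<forall>\<psi> uy. lp_max_ray F2' f2' (\<psi>, uy) \<longrightarrow> lp_max_ray F2 f2 (\<psi>, uy, 0))
     \<and> (\<forall>\<psi> uy. lp_max_opt F2' f2' (\<psi>, uy) \<and> ereal (f2' (\<psi>, uy)) > Oc \<longrightarrow>
          lp_max_unbounded F2 f2 \<and> lp_max_ray F2 f2 (\<psi>, uy, 1))
     \<and> (\<forall>\<psi> uy. lp_max_opt F2' f2' (\<psi>, uy) \<and> ereal (f2' (\<psi>, uy)) \<le> Oc \<longrightarrow>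
          lp_max_opt F2 f2 (\<psi>, uy, 0) \<and> f2 (\<psi>, uy, 0) = f2' (\<psi>, uy))
     \<and> (lp_max_unbounded FP fP \<longleftrightarrow>
          lp_min_unbounded F1 f1 \<or> lp_max_unbounded F2' f2' \<or> lp_max_value F2' f2' > Oc)
     \<and> (\<forall>\<psi> uy. \<not> lp_min_unbounded F1 f1 \<and> lp_max_opt F2' f2' (\<psi>, uy)
            \<and> ereal (f2' (\<psi>, uy)) \<le> Oc \<longrightarrow>
          lp_max_opt FP fP (\<psi>, uy, 0, 0, 0, 0) \<and> fP (\<psi>, uy, 0, 0, 0, 0) = f2' (\<psi>, uy)
          \<and> lp_max_value FP fP = lp_max_value F2' f2')"
proof -
  interpret benders_split A B b cy Gxy Gy hy Gx\<psi> G\<psi> h\<psi> K\<psi> Ks Kx k xh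
    using feas1 feas2' by unfold_locales (simp_all add: F1_def F2'_def)
  show ?thesis
    unfolding F1_def f1_def Oc_def F2_def f2_def F2'_def f2'_def FP_def fP_def dc
    using S2_unbounded_if_S2'_unbounded S2_ray_if_S2'_ray S2_ray_if_above_Oc
      S2_opt_if_below_Oc P_unbounded_iff P_opt_if_below_Oc
    by (auto simp: lp_max_opt_def)
qed

end
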